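(* Let $p=(z_0,\tau_0,Y_0)\in Son'$ with $z_0\neq0$ and $Y_0\neq0$, and suppose the Hugoniot$'$ curve $\mathcal{H}'(p)$ meets $\mathcal{C}$ in two distinct points $q_1,q_2$. Then $\sigma(p)$ lies strictly between $\sigma(q_1)$ and $\sigma(q_2)$ if and only if $(b_1+1)z_0^2<1$.
   Context: Fix real constants $a_1,a_2,a_3,a_4$ and $b_1>1$, and put $c=a_3-a_2>0$. Coordinates $(z,\tau,Y)\in\mathbb{R}^3$. Define $\widetilde U(z,\tau)=\frac{2cz}{z^2+1}+c\tau(z^2-1)$, $V_1(z,\tau)=\frac{c}{z^2+1}+c\tau z$, $U=(\widetilde U-a_1+a_4)/b_1$, $V=V_1-a_3$; the point $(z,\tau,Y)$ has right state $W'=(U-zY/2,\,V-Y/2)$ and shock speed $\sigma(z,\tau,Y)=\frac{c}{b_1}[(b_1+1)z^2-1]\tau+\frac{c}{b_1}\frac{(b_1+2)z}{z^2+1}+\sigma_0$, $\sigma_0=[(b_1+1)a_4-a_1]/b_1$. For $p\in\mathbb{R}^3$, the Hugoniot$'$ curve is $\mathcal{H}'(p)=\{q: W'(q)=W'(p)\}$. Let $\mathcal{C}=\{Y=0\}$ and let $Son'$ be the zero set of $c\,z[(b_1+1)z^2+3]\tau-[(b_1+1)z^2-1]\frac{Y}{2}+\frac{c[(b_1-1)z^2+1]}{z^2+1}$. *)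

theory Defs
  imports Complex_Main
begin

definition cc :: "real \<Rightarrow> real \<Rightarrow> real" where
  "cc a2 a3 = a3 - a2"

definition Utilde :: "real \<Rightarrow> real \<Rightarrow> real \<Rightarrow> real" where
  "Utilde c z \<tau> = 2 * c * z / (z^2 + 1) + c * \<tau> * (z^2 - 1)"

definition V1 :: "real \<Rightarrow> real \<Rightarrow> real \<Rightarrow> real" where
  "V1 c z \<tau> = c / (z^2 + 1) + c * \<tau> * z"

definition Ufun :: "real \<Rightarrow> real \<Rightarrow> real \<Rightarrow> real \<Rightarrow> real \<Rightarrow> real \<Rightarrow> real \<Rightarrow> real" where
  "Ufun a1 a2 a3 a4 b1 z \<tau> = (Utilde (cc a2 a3) z \<tau> - a1 + a4) / b1"

definition Vfun :: "real \<Rightarrow> real \<Rightarrow> real \<Rightarrow> real \<Rightarrow> real" where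
  "Vfun a2 a3 z \<tau> = V1 (cc a2 a3) z \<tau> - a3"

definition Wr :: "real \<Rightarrow> real \<Rightarrow> real \<Rightarrow> real \<Rightarrow> real \<Rightarrow> real \<times> real \<times> real \<Rightarrow> real \<times> real" where
  "Wr a1 a2 a3 a4 b1 p = (case p of (z, \<tau>, Y) \<Rightarrow>
      (Ufun a1 a2 a3 a4 b1 z \<tau> - z * Y / 2, Vfun a2 a3 z \<tau> - Y / 2))"

definition sigma0 :: "real \<Rightarrow> real \<Rightarrow> real \<Rightarrow> real" where
  "sigma0 a1 a4 b1 = ((b1 + 1) * a4 - a1) / b1"

definition sigma :: "real \<Rightarrow> real \<Rightarrow> real \<Rightarrow> real \<Rightarrow> real \<Rightarrow> real \<times> real \<times> real \<Rightarrow> real" where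
  "sigma a1 a2 a3 a4 b1 p = (case p of (z, \<tau>, Y) \<Rightarrow>
      (cc a2 a3 / b1) * ((b1 + 1) * z^2 - 1) * \<tau>
      + (cc a2 a3 / b1) * ((b1 + 2) * z / (z^2 + 1)) + sigma0 a1 a4 b1)"

definition Hugoniot' :: "real \<Rightarrow> real \<Rightarrow> real \<Rightarrow> real \<Rightarrow> real \<Rightarrow> real \<times> real \<times> real \<Rightarrow> (real \<times> real \<times> real) set" where
  "Hugoniot' a1 a2 a3 a4 b1 p = {q. Wr a1 a2 a3 a4 b1 q = Wr a1 a2 a3 a4 b1 p}"

definition Cplane :: "(real \<times> real \<times> real) set" where
  "Cplane = {q. snd (snd q) = 0}"

definition Son' :: "real \<Rightarrow> real \<Rightarrow> real \<Rightarrow> (real \<times> real \<times> real) set" where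
  "Son' a2 a3 b1 = {(z, \<tau>, Y).
      cc a2 a3 * z * ((b1 + 1) * z^2 + 3) * \<tau> - ((b1 + 1) * z^2 - 1) * (Y / 2)
      + cc a2 a3 * ((b1 - 1) * z^2 + 1) / (z^2 + 1) = 0}"

end

theory Submission
  imports Defs
begin

text \<open>On the plane \<open>Y = 0\<close> a point of the Hugoniot' curve of \<open>p\<close> is a point where
  \<open>(Utilde, V1)\<close> takes a fixed value \<open>(A, B)\<close>. Since \<open>Utilde\<close> and \<open>V1\<close> satisfy
  \<open>V1 z\<^sup>2 - Utilde z + c - V1 = 0\<close> identically and \<open>\<tau>\<close> is determined by \<open>z\<close>, the two
  intersection points correspond to the two roots \<open>z\<^sub>1, z\<^sub>2\<close> of \<open>B z\<^sup>2 - A z + c - B\<close>.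
  Moreover \<open>\<sigma>(q\<^sub>i) - \<sigma>(p) = z\<^sub>i B - z\<^sub>0 (B + Y\<^sub>0)\<close>, so by Vieta the product of the two
  differences is a quadratic expression in \<open>z\<^sub>0\<close> which on \<open>Son'\<close> equals
  \<open>Y\<^sub>0\<^sup>2 ((b\<^sub>1 + 1) z\<^sub>0\<^sup>2 - 1) / 2\<close>; \<open>\<sigma>(p)\<close> lies strictly between the two speeds
  iff this product is negative.\<close>

lemma quadratic_roots_Vieta:
  fixes a b c x y :: "'a::idom"
  assumes x: "a * x^2 - b * x + c = 0" and y: "a * y^2 - b * y + c = 0" and "x \<noteq> y"
  shows "a * (x + y) = b" and "a * (x * y) = c"
proof -
  have "(x - y) * (a * (x + y) - b) = 0"
    using x y by algebra
  with \<open>x \<noteq> y\<close> show sum: "a * (x + y) = b" by simp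
  from x sum show "a * (x * y) = c" by algebra
qed

lemma between_iff_mult_diff_neg:
  fixes x y p :: "'a::linordered_idom"
  shows "(x < p \<and> p < y \<or> y < p \<and> p < x) \<longleftrightarrow> (x - p) * (y - p) < 0"
  by (auto simp: mult_less_0_iff)

text \<open>Writing \<open>1 / (z\<^sup>2 + 1)\<close> as a variable \<open>w\<close> with \<open>w (z\<^sup>2 + 1) = 1\<close> turns the rational
  identities below into ideal membership problems, which \<open>algebra\<close> decides.\<close>
lemma Utilde_V1_polynomial_form:
  fixes c z t :: real
  obtains w where "w * (z^2 + 1) = 1" and "\<And>x. x / (z^2 + 1) = x * w"
    and "Utilde c z t = 2 * c * z * w + c * t * (z^2 - 1)"
    and "V1 c z t = c * w + c * t * z"
proof
  have "z^2 + 1 \<noteq> (0::real)" by (smt (verit) zero_le_power2)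
  then show "inverse (z^2 + 1) * (z^2 + 1) = 1" by simp
  show "x / (z^2 + 1) = x * inverse (z^2 + 1)" for x by (rule divide_inverse)
  then show "Utilde c z t = 2 * c * z * inverse (z^2 + 1) + c * t * (z^2 - 1)"
    "V1 c z t = c * inverse (z^2 + 1) + c * t * z"
    by (simp_all add: Utilde_def V1_def)
qed

lemma Utilde_minus_2z_V1: "Utilde c z t - 2 * z * V1 c z t = - c * t * (z^2 + 1)"
proof (rule Utilde_V1_polynomial_form[of z c t])
  fix w assume "w * (z^2 + 1) = 1"
    "Utilde c z t = 2 * c * z * w + c * t * (z^2 - 1)" "V1 c z t = c * w + c * t * z"
  then show ?thesis by algebra
qed

lemma V1_Utilde_quadratic: "V1 c z t * z^2 - Utilde c z t * z + (c - V1 c z t) = 0"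
proof (rule Utilde_V1_polynomial_form[of z c t])
  fix w assume "w * (z^2 + 1) = 1"
    "Utilde c z t = 2 * c * z * w + c * t * (z^2 - 1)" "V1 c z t = c * w + c * t * z"
  then show ?thesis by algebra
qed

lemma sigma_eq_Utilde_V1:
  assumes "b \<noteq> 0"
  shows "sigma a1 a2 a3 a4 b (z, t, Y) = sigma0 a1 a4 b + Utilde (cc a2 a3) z t / b + z * V1 (cc a2 a3) z t"
proof (rule Utilde_V1_polynomial_form[of z "cc a2 a3" t])
  fix w assume div: "\<And>x. x / (z^2 + 1) = x * w"
    and U: "Utilde (cc a2 a3) z t = 2 * cc a2 a3 * z * w + cc a2 a3 * t * (z^2 - 1)"
    and V: "V1 (cc a2 a3) z t = cc a2 a3 * w + cc a2 a3 * t * z"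
  show ?thesis
    unfolding sigma_def prod.case div U V using assms by (simp add: field_simps power2_eq_square)
qed

lemma Son'_quadratic_identity:
  assumes "(z, t, Y) \<in> Son' a2 a3 b"
  defines "c \<equiv> cc a2 a3"
  defines "A \<equiv> Utilde c z t - b * z * Y / 2" and "B \<equiv> V1 c z t - Y / 2"
  shows "z^2 * (B + Y)^2 - A * z * (B + Y) + B * (c - B) = Y^2 * ((b + 1) * z^2 - 1) / 2"
proof (rule Utilde_V1_polynomial_form[of z c t])
  fix w assume div: "\<And>x. x / (z^2 + 1) = x * w"
    and polynomial_form: "w * (z^2 + 1) = 1"
      "Utilde c z t = 2 * c * z * w + c * t * (z^2 - 1)" "V1 c z t = c * w + c * t * z"
  have "c * z * ((b + 1) * z^2 + 3) * t - ((b + 1) * z^2 - 1) * (Y / 2)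
      + c * ((b - 1) * z^2 + 1) * w = 0"
    using assms(1) by (simp add: Son'_def c_def div)
  with polynomial_form show ?thesis unfolding A_def B_def by algebra
qed

lemma Utilde_V1_eq_imp_tau_eq:
  assumes "c \<noteq> 0" and "Utilde c z t = Utilde c z t'" and "V1 c z t = V1 c z t'"
  shows "t = t'"
proof -
  have "c * (z^2 + 1) * t = c * (z^2 + 1) * t'"
    using Utilde_minus_2z_V1[of c z t] Utilde_minus_2z_V1[of c z t'] assms(2,3)
    by (simp add: algebra_simps)
  moreover have "z^2 + 1 \<noteq> 0" by (smt (verit) zero_le_power2)
  ultimately show ?thesis using \<open>c \<noteq> 0\<close> by simp
qed

lemma mem_Hugoniot'_Cplane_iff:
  assumes "b \<noteq> 0"
  shows "(z, t, Y) \<in> Hugoniot' a1 a2 a3 a4 b (z0, t0, Y0) \<inter> Cplane \<longleftrightarrow>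
    Y = 0 \<and> Utilde (cc a2 a3) z t = Utilde (cc a2 a3) z0 t0 - b * z0 * Y0 / 2
          \<and> V1 (cc a2 a3) z t = V1 (cc a2 a3) z0 t0 - Y0 / 2"
  using assms by (auto simp: Hugoniot'_def Cplane_def Wr_def Ufun_def Vfun_def field_simps)

lemma sigma_diff_on_Hugoniot'_Cplane:
  assumes "b \<noteq> 0" and "(z, t, Y) \<in> Hugoniot' a1 a2 a3 a4 b (z0, t0, Y0) \<inter> Cplane"
  defines "B \<equiv> V1 (cc a2 a3) z0 t0 - Y0 / 2"
  shows "sigma a1 a2 a3 a4 b (z, t, Y) - sigma a1 a2 a3 a4 b (z0, t0, Y0) = z * B - z0 * (B + Y0)"
proof -
  have U: "Utilde (cc a2 a3) z t = Utilde (cc a2 a3) z0 t0 - b * z0 * Y0 / 2"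
    and V: "V1 (cc a2 a3) z t = B"
    using assms(2) unfolding mem_Hugoniot'_Cplane_iff[OF \<open>b \<noteq> 0\<close>] B_def by simp_all
  show ?thesis
    using \<open>b \<noteq> 0\<close> by (simp add: sigma_eq_Utilde_V1 U V B_def field_simps)
qed

lemma Hugoniot'_Cplane_two_points_Vieta:
  assumes "b \<noteq> 0" and "cc a2 a3 \<noteq> 0" and "(z1, t1, Y1) \<noteq> (z2, t2, Y2)"
    and "(z1, t1, Y1) \<in> Hugoniot' a1 a2 a3 a4 b (z0, t0, Y0) \<inter> Cplane"
    and "(z2, t2, Y2) \<in> Hugoniot' a1 a2 a3 a4 b (z0, t0, Y0) \<inter> Cplane"
  defines "A \<equiv> Utilde (cc a2 a3) z0 t0 - b * z0 * Y0 / 2" and "B \<equiv> V1 (cc a2 a3) z0 t0 - Y0 / 2"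
  shows "B * (z1 + z2) = A" and "B * (z1 * z2) = cc a2 a3 - B"
proof -
  have q1: "Y1 = 0" "Utilde (cc a2 a3) z1 t1 = A" "V1 (cc a2 a3) z1 t1 = B"
    and q2: "Y2 = 0" "Utilde (cc a2 a3) z2 t2 = A" "V1 (cc a2 a3) z2 t2 = B"
    using assms(4,5) unfolding mem_Hugoniot'_Cplane_iff[OF \<open>b \<noteq> 0\<close>] A_def B_def by simp_all
  have "z1 \<noteq> z2"
    using assms(3) q1 q2 Utilde_V1_eq_imp_tau_eq[OF \<open>cc a2 a3 \<noteq> 0\<close>] by auto
  moreover have "B * z1^2 - A * z1 + (cc a2 a3 - B) = 0" "B * z2^2 - A * z2 + (cc a2 a3 - B) = 0"
    using V1_Utilde_quadratic[of "cc a2 a3" z1 t1] V1_Utilde_quadratic[of "cc a2 a3" z2 t2] q1 q2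
    by simp_all
  ultimately show "B * (z1 + z2) = A" and "B * (z1 * z2) = cc a2 a3 - B"
    using quadratic_roots_Vieta by blast+
qed

lemma sigma_diff_product_on_Son':
  assumes "b \<noteq> 0" and "cc a2 a3 \<noteq> 0" and p: "(z0, t0, Y0) \<in> Son' a2 a3 b" and "q1 \<noteq> q2"
    and "q1 \<in> Hugoniot' a1 a2 a3 a4 b (z0, t0, Y0) \<inter> Cplane"
    and "q2 \<in> Hugoniot' a1 a2 a3 a4 b (z0, t0, Y0) \<inter> Cplane"
  shows "(sigma a1 a2 a3 a4 b q1 - sigma a1 a2 a3 a4 b (z0, t0, Y0))
      * (sigma a1 a2 a3 a4 b q2 - sigma a1 a2 a3 a4 b (z0, t0, Y0))
      = Y0^2 * ((b + 1) * z0^2 - 1) / 2"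
proof -
  define c A B where "c = cc a2 a3"
    and "A = Utilde c z0 t0 - b * z0 * Y0 / 2" and "B = V1 c z0 t0 - Y0 / 2"
  obtain z1 t1 Y1 z2 t2 Y2 where q: "q1 = (z1, t1, Y1)" "q2 = (z2, t2, Y2)"
    by (cases q1, cases q2) auto
  have Vieta: "B * (z1 + z2) = A" "B * (z1 * z2) = c - B"
    using Hugoniot'_Cplane_two_points_Vieta[of b a2 a3 z1 t1 Y1 z2 t2 Y2] assms q
    unfolding A_def B_def c_def by auto
  have "(sigma a1 a2 a3 a4 b q1 - sigma a1 a2 a3 a4 b (z0, t0, Y0))
      * (sigma a1 a2 a3 a4 b q2 - sigma a1 a2 a3 a4 b (z0, t0, Y0))
      = (z1 * B - z0 * (B + Y0)) * (z2 * B - z0 * (B + Y0))"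
    using sigma_diff_on_Hugoniot'_Cplane[of b z1 t1 Y1] sigma_diff_on_Hugoniot'_Cplane[of b z2 t2 Y2]
      assms q unfolding B_def c_def by simp
  also have "\<dots> = B * (B * (z1 * z2)) - z0 * (B + Y0) * (B * (z1 + z2)) + z0^2 * (B + Y0)^2"
    by (simp add: algebra_simps power2_eq_square)
  also have "\<dots> = z0^2 * (B + Y0)^2 - A * z0 * (B + Y0) + B * (c - B)"
    unfolding Vieta by (simp add: algebra_simps)
  also have "\<dots> = Y0^2 * ((b + 1) * z0^2 - 1) / 2"
    using Son'_quadratic_identity[OF p] unfolding A_def B_def c_def .
  finally show ?thesis .
qed

theorem mainTheorem12:
  fixes a1 a2 a3 a4 b1 z0 \<tau>0 Y0 :: real
    and q1 q2 :: "real \<times> real \<times> real"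
  assumes hb1: "b1 > 1"
    and hc: "cc a2 a3 > 0"
    and hp: "(z0, \<tau>0, Y0) \<in> Son' a2 a3 b1"
    and hz0: "z0 \<noteq> 0"
    and hY0: "Y0 \<noteq> 0"
    and hmeet: "Hugoniot' a1 a2 a3 a4 b1 (z0, \<tau>0, Y0) \<inter> Cplane = {q1, q2}"
    and hdist: "q1 \<noteq> q2"
  shows "((sigma a1 a2 a3 a4 b1 q1 < sigma a1 a2 a3 a4 b1 (z0, \<tau>0, Y0)
            \<and> sigma a1 a2 a3 a4 b1 (z0, \<tau>0, Y0) < sigma a1 a2 a3 a4 b1 q2)
          \<or> (sigma a1 a2 a3 a4 b1 q2 < sigma a1 a2 a3 a4 b1 (z0, \<tau>0, Y0)
            \<and> sigma a1 a2 a3 a4 b1 (z0, \<tau>0, Y0) < sigma a1 a2 a3 a4 b1 q1))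
         \<longleftrightarrow> (b1 + 1) * z0^2 < 1"
proof -
  have "b1 \<noteq> 0" and "cc a2 a3 \<noteq> 0" using hb1 hc by simp_all
  moreover have "q1 \<in> Hugoniot' a1 a2 a3 a4 b1 (z0, \<tau>0, Y0) \<inter> Cplane"
    and "q2 \<in> Hugoniot' a1 a2 a3 a4 b1 (z0, \<tau>0, Y0) \<inter> Cplane"
    using hmeet by auto
  ultimately have product: "(sigma a1 a2 a3 a4 b1 q1 - sigma a1 a2 a3 a4 b1 (z0, \<tau>0, Y0))
      * (sigma a1 a2 a3 a4 b1 q2 - sigma a1 a2 a3 a4 b1 (z0, \<tau>0, Y0))
      = Y0^2 * ((b1 + 1) * z0^2 - 1) / 2"
    using sigma_diff_product_on_Son'[OF _ _ hp hdist] by blast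
  have "0 < Y0^2" using hY0 by simp
  then show ?thesis
    unfolding between_iff_mult_diff_neg product by (simp add: mult_less_0_iff)
qed

end
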